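(* Let $G$ be a left-orderable group acting on its space $\mathcal{LO}(G)$ of left-orderings by conjugation. Then every left-ordering whose orbit under this action is finite is Conradian.
   Context: A left-ordering is a total order invariant under left multiplication; it is Conradian if for all $f\succ id$, $g\succ id$ there is $n\in\mathbb{N}$ with $fg^n\succ g$. The action of $g\in G$ sends $\preceq$ to $\preceq_g$, defined by $h\succ_g f$ iff $ghg^{-1}\succ gfg^{-1}$. *)

theory Defs
  imports "HOL-Algebra.Group"
begin

definition left_ordering :: "('a, 'b) monoid_scheme \<Rightarrow> ('a \<Rightarrow> 'a \<Rightarrow> bool) \<Rightarrow> bool" where
  "left_ordering G R \<longleftrightarrow>
     (\<forall>x y. R x y \<longrightarrow> x \<in> carrier G \<and> y \<in> carrier G) \<and>
     (\<forall>x\<in>carrier G. R x x) \<and>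
     (\<forall>x\<in>carrier G. \<forall>y\<in>carrier G. R x y \<and> R y x \<longrightarrow> x = y) \<and>
     (\<forall>x\<in>carrier G. \<forall>y\<in>carrier G. \<forall>z\<in>carrier G. R x y \<and> R y z \<longrightarrow> R x z) \<and>
     (\<forall>x\<in>carrier G. \<forall>y\<in>carrier G. R x y \<or> R y x) \<and>
     (\<forall>h\<in>carrier G. \<forall>x\<in>carrier G. \<forall>y\<in>carrier G. R x y \<longrightarrow> R (h \<otimes>\<^bsub>G\<^esub> x) (h \<otimes>\<^bsub>G\<^esub> y))"

definition LO :: "('a, 'b) monoid_scheme \<Rightarrow> ('a \<Rightarrow> 'a \<Rightarrow> bool) set" where
  "LO G = {R. left_ordering G R}"

definition left_orderable :: "('a, 'b) monoid_scheme \<Rightarrow> bool" where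
  "left_orderable G \<longleftrightarrow> LO G \<noteq> {}"

definition strict_gr :: "('a \<Rightarrow> 'a \<Rightarrow> bool) \<Rightarrow> 'a \<Rightarrow> 'a \<Rightarrow> bool" where
  "strict_gr R f g \<longleftrightarrow> R g f \<and> f \<noteq> g"

definition conj_act :: "('a, 'b) monoid_scheme \<Rightarrow> 'a \<Rightarrow> ('a \<Rightarrow> 'a \<Rightarrow> bool) \<Rightarrow> ('a \<Rightarrow> 'a \<Rightarrow> bool)" where
  "conj_act G g R = (\<lambda>f h. f \<in> carrier G \<and> h \<in> carrier G \<and>
      R (g \<otimes>\<^bsub>G\<^esub> f \<otimes>\<^bsub>G\<^esub> inv\<^bsub>G\<^esub> g) (g \<otimes>\<^bsub>G\<^esub> h \<otimes>\<^bsub>G\<^esub> inv\<^bsub>G\<^esub> g))"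

definition conj_orbit :: "('a, 'b) monoid_scheme \<Rightarrow> ('a \<Rightarrow> 'a \<Rightarrow> bool) \<Rightarrow> ('a \<Rightarrow> 'a \<Rightarrow> bool) set" where
  "conj_orbit G R = {conj_act G g R | g. g \<in> carrier G}"

definition conradian :: "('a, 'b) monoid_scheme \<Rightarrow> ('a \<Rightarrow> 'a \<Rightarrow> bool) \<Rightarrow> bool" where
  "conradian G R \<longleftrightarrow>
     (\<forall>f\<in>carrier G. \<forall>g\<in>carrier G.
        strict_gr R f \<one>\<^bsub>G\<^esub> \<and> strict_gr R g \<one>\<^bsub>G\<^esub> \<longrightarrow>
        (\<exists>n::nat. n \<ge> 1 \<and> strict_gr R (f \<otimes>\<^bsub>G\<^esub> (g [^]\<^bsub>G\<^esub> n)) g))"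

end

theory Submission
  imports Defs
begin

text \<open>If the conjugation orbit of \<open>\<preceq>\<close> is finite, then for every \<open>g\<close> some power
  \<open>c = g\<^sup>d\<close> with \<open>d \<ge> 1\<close> fixes \<open>\<preceq>\<close> (pigeonhole on the orbit of the powers of \<open>g\<close>).
  Conjugation invariance then gives \<open>c \<prec> f c\<close> for every \<open>f \<succ> 1\<close>, while
  \<open>g \<preceq> g\<^sup>d = c\<close> for \<open>g \<succ> 1\<close>; hence \<open>f g\<^sup>d \<succ> g\<close>.\<close>

lemma left_ordering_closed:
  "left_ordering G R \<Longrightarrow> R x y \<Longrightarrow> x \<in> carrier G \<and> y \<in> carrier G"
  and left_ordering_refl:
  "left_ordering G R \<Longrightarrow> x \<in> carrier G \<Longrightarrow> R x x"
  and left_ordering_antisym: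
  "left_ordering G R \<Longrightarrow> x \<in> carrier G \<Longrightarrow> y \<in> carrier G \<Longrightarrow> R x y \<Longrightarrow> R y x \<Longrightarrow> x = y"
  and left_ordering_trans:
  "left_ordering G R \<Longrightarrow> x \<in> carrier G \<Longrightarrow> y \<in> carrier G \<Longrightarrow> z \<in> carrier G
     \<Longrightarrow> R x y \<Longrightarrow> R y z \<Longrightarrow> R x z"
  and left_ordering_mult_left:
  "left_ordering G R \<Longrightarrow> h \<in> carrier G \<Longrightarrow> x \<in> carrier G \<Longrightarrow> y \<in> carrier G
     \<Longrightarrow> R x y \<Longrightarrow> R (h \<otimes>\<^bsub>G\<^esub> x) (h \<otimes>\<^bsub>G\<^esub> y)"
  unfolding left_ordering_def by metis+

context group
begin

lemma conj_act_one:
  assumes "left_ordering G R"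
  shows "conj_act G \<one> R = R"
  using left_ordering_closed[OF assms] by (auto simp: conj_act_def fun_eq_iff)

lemma conj_act_mult:
  assumes "h \<in> carrier G" "k \<in> carrier G"
  shows "conj_act G k (conj_act G h R) = conj_act G (h \<otimes> k) R"
proof -
  have "h \<otimes> (k \<otimes> x \<otimes> inv k) \<otimes> inv h = h \<otimes> k \<otimes> x \<otimes> inv (h \<otimes> k)"
    if "x \<in> carrier G" for x
    using that assms by (simp add: m_assoc inv_mult_group)
  with assms show ?thesis
    by (auto simp: conj_act_def fun_eq_iff)
qed

lemma conj_act_power_eq_imp_fixed:
  assumes "left_ordering G R" "g \<in> carrier G" "(i::nat) \<le> j"
    and "conj_act G (g [^] i) R = conj_act G (g [^] j) R"
  shows "conj_act G (g [^] (j - i)) R = R"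
proof -
  let ?a = "g [^] i"
  have a: "?a \<in> carrier G"
    using assms(2) by simp
  then have a': "inv ?a \<in> carrier G"
    by simp
  have "g [^] j = g [^] (j - i) \<otimes> ?a"
    using assms(2,3) by (simp add: nat_pow_mult)
  then have "g [^] j \<otimes> inv ?a = g [^] (j - i)"
    using assms(2) a by (simp add: m_assoc)
  then have "conj_act G (g [^] (j - i)) R = conj_act G (inv ?a) (conj_act G (g [^] j) R)"
    using assms(2) a' by (simp add: conj_act_mult)
  also have "\<dots> = conj_act G (inv ?a) (conj_act G ?a R)"
    using assms(4) by simp
  also have "\<dots> = R"
    using a a' by (simp add: conj_act_mult conj_act_one[OF assms(1)])
  finally show ?thesis .
qed

lemma finite_conj_orbit_imp_fixed_power:
  assumes "left_ordering G R" "finite (conj_orbit G R)" "g \<in> carrier G"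
  obtains d :: nat where "d \<ge> 1" "conj_act G (g [^] d) R = R"
proof -
  let ?h = "\<lambda>k::nat. conj_act G (g [^] k) R"
  have "range ?h \<subseteq> conj_orbit G R"
    using assms(3) by (auto simp: conj_orbit_def)
  then have "\<not> inj ?h"
    using assms(2) finite_subset finite_imageD by blast
  then obtain i j where "i < j" "?h i = ?h j"
    unfolding inj_def by (metis linorder_neqE_nat)
  with assms(1,3) have "conj_act G (g [^] (j - i)) R = R"
    by (simp add: conj_act_power_eq_imp_fixed)
  with \<open>i < j\<close> show thesis
    by (intro that) simp_all
qed

lemma left_ordering_positive_conj:
  assumes "left_ordering G R" "conj_act G c R = R" "c \<in> carrier G" "f \<in> carrier G" "R \<one> f"
  shows "R c (f \<otimes> c)"
proof -
  have cfc: "inv c \<otimes> f \<otimes> c \<in> carrier G"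
    using assms(3,4) by simp
  have "c \<otimes> (inv c \<otimes> f \<otimes> c) \<otimes> inv c = f"
    using assms(3,4) by (simp add: m_assoc flip: m_assoc[of c "inv c"])
  then have "conj_act G c R \<one> (inv c \<otimes> f \<otimes> c) = R \<one> f"
    using assms(3) cfc by (simp add: conj_act_def)
  then have "R \<one> (inv c \<otimes> f \<otimes> c)"
    using assms(2,5) by simp
  from left_ordering_mult_left[OF assms(1) assms(3) one_closed cfc this]
  show ?thesis
    using assms(3,4) by (simp add: m_assoc[symmetric])
qed

lemma left_ordering_le_pow:
  assumes "left_ordering G R" "g \<in> carrier G" "R \<one> g" "(k::nat) \<ge> 1"
  shows "R g (g [^] k)"
  using assms(4)
proof (induction k rule: dec_induct)
  case base
  show ?case using assms(1,2) by (simp add: left_ordering_refl)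
next
  case (step k)
  have gk: "g [^] k \<in> carrier G"
    using assms(2) by simp
  have "R (g [^] k \<otimes> \<one>) (g [^] k \<otimes> g)"
    using left_ordering_mult_left[OF assms(1) gk one_closed assms(2,3)] .
  then have "R (g [^] k) (g [^] Suc k)"
    using assms(2) by (simp add: nat_pow_Suc)
  from left_ordering_trans[OF assms(1) assms(2) gk _ step.IH this] assms(2)
  show ?case by simp
qed

lemma conradian_if_finite_conj_orbit:
  assumes "left_ordering G R" "finite (conj_orbit G R)"
  shows "conradian G R"
  unfolding conradian_def
proof (intro ballI impI)
  fix f g assume f: "f \<in> carrier G" and g: "g \<in> carrier G"
    and "strict_gr R f \<one> \<and> strict_gr R g \<one>"
  then have f1: "R \<one> f" "f \<noteq> \<one>" and g1: "R \<one> g"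
    by (auto simp: strict_gr_def)
  obtain d :: nat where d: "d \<ge> 1" "conj_act G (g [^] d) R = R"
    using finite_conj_orbit_imp_fixed_power[OF assms g] .
  let ?c = "g [^] d"
  have c: "?c \<in> carrier G" and fc: "f \<otimes> ?c \<in> carrier G"
    using f g by auto
  have gc: "R g ?c"
    using left_ordering_le_pow[OF assms(1) g g1 d(1)] .
  have cfc: "R ?c (f \<otimes> ?c)"
    using left_ordering_positive_conj[OF assms(1) d(2) c f f1(1)] .
  have "f \<otimes> ?c \<noteq> g"
  proof
    assume "f \<otimes> ?c = g"
    then have "?c = g"
      using gc cfc g c left_ordering_antisym[OF assms(1)] by simp
    with \<open>f \<otimes> ?c = g\<close> f g have "f = \<one>"
      by (metis l_one one_closed right_cancel)
    with f1(2) show False ..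
  qed
  then show "\<exists>n::nat. n \<ge> 1 \<and> strict_gr R (f \<otimes> g [^] n) g"
    using d(1) left_ordering_trans[OF assms(1) g c fc gc cfc]
    by (auto simp: strict_gr_def)
qed

end

theorem mainTheorem20:
  fixes G :: "('a, 'b) monoid_scheme" and R :: "'a \<Rightarrow> 'a \<Rightarrow> bool"
  assumes "group G"
    and "left_orderable G"
    and "R \<in> LO G"
    and "finite (conj_orbit G R)"
  shows "conradian G R"
  using group.conradian_if_finite_conj_orbit[OF assms(1)] assms(3,4) by (simp add: LO_def)

end
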